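(* Under the hypergraph setup (with $Q(v,e)\in[0,1]$, $w(e)\in[0,1]$, $n_e\le E$ for every hyperedge $e$, $n_v\le D$ for every vertex $v$, and $\rho_{\max}=\sup_{x\in[0,E]}\rho(x)<\infty$), the generalized transition matrix satisfies $\|\tilde T\|_1\le\sqrt{1+\rho_{\max}ED}$, where $\|\cdot\|_1$ is the matrix norm induced by the vector $\ell_1$-norm (maximum absolute column sum).
   Context: Hypergraph setup: $\mathcal V=\{v_1,\dots,v_N\}$ is a finite vertex set and $\mathcal E$ a finite set of hyperedges (nonempty subsets of $\mathcal V$). $Q\in\mathbb{R}^{N\times|\mathcal E|}$ has entries $Q(v,e)\in[0,1]$ with $Q(v,e)=0$ whenever $v\notin e$. $W$ is the $|\mathcal E|\times|\mathcal E|$ diagonal matrix with entries $w(e)\in[0,1]$. $\delta(e)=\sum_{v}Q(v,e)$. $\rho:[0,\infty)\to[0,\infty)$ is a function and $\rho(D_{\mathcal E})$ is the diagonal matrix with entries $\rho(\delta(e))$. $\tilde d(v)=1+\sum_{e}w(e)Q(v,e)\delta(e)\rho(\delta(e))$ and $\tilde D_{\mathcal V}=\mathrm{diag}(\tilde d(v_1),\dots,\tilde d(v_N))$. The generalized transition matrix is $\tilde T=\tilde D_{\mathcal V}^{-1/2}\big(QW\rho(D_{\mathcal E})Q^\top+I\big)\tilde D_{\mathcal V}^{-1/2}$. $n_e$ denotes the number of vertices in $e$ and $n_v$ the number of hyperedges containing $v$. *)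

theory Defs
  imports Complex_Main
begin

definition hdelta :: "'v set \<Rightarrow> ('v \<Rightarrow> 'v set \<Rightarrow> real) \<Rightarrow> 'v set \<Rightarrow> real" where
  "hdelta V Q e = (\<Sum>v\<in>V. Q v e)"

definition hdeg :: "'v set \<Rightarrow> 'v set set \<Rightarrow> ('v \<Rightarrow> 'v set \<Rightarrow> real) \<Rightarrow> ('v set \<Rightarrow> real)
    \<Rightarrow> (real \<Rightarrow> real) \<Rightarrow> 'v \<Rightarrow> real" where
  "hdeg V Es Q w \<rho> v = 1 + (\<Sum>e\<in>Es. w e * Q v e * hdelta V Q e * \<rho> (hdelta V Q e))"

text \<open>Entry (u,v) of the generalized transition matrix
  D^{-1/2} (Q W rho(D_E) Q^T + I) D^{-1/2}.\<close>
definition genT :: "'v set \<Rightarrow> 'v set set \<Rightarrow> ('v \<Rightarrow> 'v set \<Rightarrow> real) \<Rightarrow> ('v set \<Rightarrow> real)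
    \<Rightarrow> (real \<Rightarrow> real) \<Rightarrow> 'v \<Rightarrow> 'v \<Rightarrow> real" where
  "genT V Es Q w \<rho> u v =
     ((\<Sum>e\<in>Es. Q u e * w e * \<rho> (hdelta V Q e) * Q v e) + (if u = v then 1 else 0))
     / (sqrt (hdeg V Es Q w \<rho> u) * sqrt (hdeg V Es Q w \<rho> v))"

definition mat_norm1 :: "'v set \<Rightarrow> ('v \<Rightarrow> 'v \<Rightarrow> real) \<Rightarrow> real" where
  "mat_norm1 V M = Max ((\<lambda>v. \<Sum>u\<in>V. \<bar>M u v\<bar>) ` V)"

end

theory Submission
  imports Defs
begin

text \<open>Write \<open>A = Q W \<rho>(D\<^sub>\<E>) Q\<^sup>T + I\<close>, so that \<open>T = D\<^sup>-\<^sup>1\<^sup>/\<^sup>2 A D\<^sup>-\<^sup>1\<^sup>/\<^sup>2\<close>.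
  The column sums of the nonnegative matrix \<open>A\<close> are exactly the degrees \<open>d(v)\<close>, and
  \<open>d \<ge> 1\<close>, so the \<open>v\<close>-th column sum of \<open>T\<close> is at most \<open>d(v) / \<surd>d(v) = \<surd>d(v)\<close>.
  Finally every hyperedge has \<open>\<delta>(e) \<le> n\<^sub>e \<le> E\<close>, \<open>w Q \<le> 1\<close>, and each vertex lies in at
  most \<open>D\<close> hyperedges, whence \<open>d(v) \<le> 1 + \<rho>\<^sub>m\<^sub>a\<^sub>x E D\<close>.\<close>

lemma mat_norm1_le:
  assumes "finite V" "V \<noteq> {}" "\<And>v. v \<in> V \<Longrightarrow> (\<Sum>u\<in>V. \<bar>M u v\<bar>) \<le> B"
  shows "mat_norm1 V M \<le> B"
  unfolding mat_norm1_def using assms by (subst Max_le_iff) auto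

lemma column_sum_sym_normalized_le_sqrt:
  fixes A :: "'a \<Rightarrow> 'a \<Rightarrow> real"
  assumes "finite V" "v \<in> V"
    and A_nonneg: "\<And>u. u \<in> V \<Longrightarrow> 0 \<le> A u v"
    and d_ge_1: "\<And>u. u \<in> V \<Longrightarrow> 1 \<le> d u"
    and column_sum: "(\<Sum>u\<in>V. A u v) = d v"
  shows "(\<Sum>u\<in>V. \<bar>A u v / (sqrt (d u) * sqrt (d v))\<bar>) \<le> sqrt (d v)"
proof -
  have sqrt_dv: "1 \<le> sqrt (d v)" using d_ge_1[OF \<open>v \<in> V\<close>] by simp
  have "(\<Sum>u\<in>V. \<bar>A u v / (sqrt (d u) * sqrt (d v))\<bar>) \<le> (\<Sum>u\<in>V. A u v / sqrt (d v))"
  proof (rule sum_mono)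
    fix u assume u: "u \<in> V"
    have "1 \<le> sqrt (d u)" using d_ge_1[OF u] by simp
    then have "sqrt (d v) \<le> sqrt (d u) * sqrt (d v)"
      using sqrt_dv by (simp add: mult_right_mono[of 1, simplified])
    then show "\<bar>A u v / (sqrt (d u) * sqrt (d v))\<bar> \<le> A u v / sqrt (d v)"
      using A_nonneg[OF u] sqrt_dv by (auto intro: divide_left_mono)
  qed
  also have "\<dots> = d v / sqrt (d v)" by (simp add: column_sum sum_divide_distrib[symmetric])
  also have "\<dots> = sqrt (d v)" using d_ge_1[OF \<open>v \<in> V\<close>] by (simp add: real_div_sqrt)
  finally show ?thesis .
qed

definition hyper_adj :: "'v set \<Rightarrow> 'v set set \<Rightarrow> ('v \<Rightarrow> 'v set \<Rightarrow> real) \<Rightarrow> ('v set \<Rightarrow> real)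
    \<Rightarrow> (real \<Rightarrow> real) \<Rightarrow> 'v \<Rightarrow> 'v \<Rightarrow> real" where
  "hyper_adj V Es Q w \<rho> u v =
     (\<Sum>e\<in>Es. Q u e * w e * \<rho> (hdelta V Q e) * Q v e) + (if u = v then 1 else 0)"

lemma genT_eq_hyper_adj:
  "genT V Es Q w \<rho> u v = hyper_adj V Es Q w \<rho> u v
     / (sqrt (hdeg V Es Q w \<rho> u) * sqrt (hdeg V Es Q w \<rho> v))"
  unfolding genT_def hyper_adj_def ..

lemma sum_hyper_adj_eq_hdeg:
  assumes "finite V" "v \<in> V"
  shows "(\<Sum>u\<in>V. hyper_adj V Es Q w \<rho> u v) = hdeg V Es Q w \<rho> v"
proof -
  have "(\<Sum>u\<in>V. \<Sum>e\<in>Es. Q u e * w e * \<rho> (hdelta V Q e) * Q v e)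
      = (\<Sum>e\<in>Es. \<Sum>u\<in>V. Q u e * w e * \<rho> (hdelta V Q e) * Q v e)"
    by (rule sum.swap)
  also have "\<dots> = (\<Sum>e\<in>Es. w e * Q v e * hdelta V Q e * \<rho> (hdelta V Q e))"
    unfolding hdelta_def
    by (intro sum.cong refl) (simp add: sum_distrib_left sum_distrib_right algebra_simps)
  finally show ?thesis
    using assms by (simp add: hyper_adj_def hdeg_def sum.distrib)
qed

lemma hdelta_nonneg:
  assumes "\<forall>v\<in>V. 0 \<le> Q v e"
  shows "0 \<le> hdelta V Q e"
  unfolding hdelta_def using assms by (simp add: sum_nonneg)

lemma hdelta_le_card:
  assumes "finite V" "e \<subseteq> V" "\<forall>v\<in>V. Q v e \<le> 1" "\<forall>v\<in>V. v \<notin> e \<longrightarrow> Q v e = 0"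
  shows "hdelta V Q e \<le> real (card e)"
proof -
  have "hdelta V Q e = (\<Sum>v\<in>e. Q v e)"
    unfolding hdelta_def using assms by (intro sum.mono_neutral_right) auto
  also have "\<dots> \<le> (\<Sum>v\<in>e. 1)" using assms by (intro sum_mono) auto
  finally show ?thesis by simp
qed

locale weighted_hypergraph =
  fixes V :: "'v set" and Es :: "'v set set"
    and Q :: "'v \<Rightarrow> 'v set \<Rightarrow> real" and w :: "'v set \<Rightarrow> real"
    and \<rho> :: "real \<Rightarrow> real" and E D :: nat
  assumes finite_V: "finite V" and finite_Es: "finite Es"
    and edges_subset: "\<forall>e\<in>Es. e \<subseteq> V"
    and Q_range: "\<forall>v\<in>V. \<forall>e\<in>Es. 0 \<le> Q v e \<and> Q v e \<le> 1"
    and Q_outside: "\<forall>v\<in>V. \<forall>e\<in>Es. v \<notin> e \<longrightarrow> Q v e = 0"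
    and w_range: "\<forall>e\<in>Es. 0 \<le> w e \<and> w e \<le> 1"
    and \<rho>_nonneg: "\<forall>x\<ge>0. 0 \<le> \<rho> x"
    and edge_size: "\<forall>e\<in>Es. card e \<le> E"
    and vertex_degree: "\<forall>v\<in>V. card {e\<in>Es. v \<in> e} \<le> D"
    and \<rho>_bdd: "bdd_above (\<rho> ` {0..real E})"
begin

definition \<rho>_max :: real where "\<rho>_max = (SUP x\<in>{0..real E}. \<rho> x)"

lemma hdelta_range:
  assumes "e \<in> Es"
  shows "hdelta V Q e \<in> {0..real E}"
proof -
  have "hdelta V Q e \<le> real (card e)"
    using assms finite_V edges_subset Q_range Q_outside by (intro hdelta_le_card) auto
  also have "\<dots> \<le> real E" using assms edge_size by simp
  finally show ?thesis using assms Q_range by (simp add: hdelta_nonneg)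
qed

lemma \<rho>_le_\<rho>_max: "x \<in> {0..real E} \<Longrightarrow> \<rho> x \<le> \<rho>_max"
  unfolding \<rho>_max_def by (rule cSUP_upper[OF _ \<rho>_bdd])

lemma \<rho>_max_nonneg: "0 \<le> \<rho>_max"
  using \<rho>_nonneg \<rho>_le_\<rho>_max[of 0] by force

lemma \<rho>_hdelta_bounds:
  assumes "e \<in> Es"
  shows "0 \<le> \<rho> (hdelta V Q e)" "\<rho> (hdelta V Q e) \<le> \<rho>_max"
  using hdelta_range[OF assms] \<rho>_nonneg \<rho>_le_\<rho>_max by auto

lemma hyper_adj_nonneg: "u \<in> V \<Longrightarrow> v \<in> V \<Longrightarrow> 0 \<le> hyper_adj V Es Q w \<rho> u v"
  unfolding hyper_adj_def using Q_range w_range \<rho>_hdelta_bounds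
  by (intro add_nonneg_nonneg sum_nonneg) auto

lemma hdeg_term_nonneg:
  "v \<in> V \<Longrightarrow> e \<in> Es \<Longrightarrow> 0 \<le> w e * Q v e * hdelta V Q e * \<rho> (hdelta V Q e)"
  using Q_range w_range hdelta_range \<rho>_hdelta_bounds by simp

lemma hdeg_ge_1: "v \<in> V \<Longrightarrow> 1 \<le> hdeg V Es Q w \<rho> v"
  unfolding hdeg_def using hdeg_term_nonneg by (simp add: sum_nonneg)

lemma hdeg_le:
  assumes v: "v \<in> V"
  shows "hdeg V Es Q w \<rho> v \<le> 1 + \<rho>_max * real E * real D"
proof -
  let ?S = "{e\<in>Es. v \<in> e}"
  have "(\<Sum>e\<in>Es. w e * Q v e * hdelta V Q e * \<rho> (hdelta V Q e))
      = (\<Sum>e\<in>?S. w e * Q v e * hdelta V Q e * \<rho> (hdelta V Q e))"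
    using Q_outside v finite_Es by (intro sum.mono_neutral_right) auto
  also have "\<dots> \<le> (\<Sum>e\<in>?S. real E * \<rho>_max)"
  proof (rule sum_mono)
    fix e assume "e \<in> ?S"
    then have e: "e \<in> Es" by simp
    have "w e * Q v e * (hdelta V Q e * \<rho> (hdelta V Q e)) \<le> hdelta V Q e * \<rho> (hdelta V Q e)"
      using Q_range w_range v e hdelta_range[OF e] \<rho>_hdelta_bounds[OF e]
      by (intro mult_left_le_one_le) (auto intro: mult_le_one)
    also have "\<dots> \<le> real E * \<rho>_max"
      using hdelta_range[OF e] \<rho>_hdelta_bounds[OF e] by (auto intro: mult_mono)
    finally show "w e * Q v e * hdelta V Q e * \<rho> (hdelta V Q e) \<le> real E * \<rho>_max"
      by (simp add: mult.assoc)
  qed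
  also have "\<dots> \<le> real D * (real E * \<rho>_max)"
    using vertex_degree v \<rho>_max_nonneg by (simp add: mult_right_mono)
  finally show ?thesis unfolding hdeg_def by (simp add: algebra_simps)
qed

lemma genT_column_sum_le_sqrt_hdeg:
  "v \<in> V \<Longrightarrow> (\<Sum>u\<in>V. \<bar>genT V Es Q w \<rho> u v\<bar>) \<le> sqrt (hdeg V Es Q w \<rho> v)"
  unfolding genT_eq_hyper_adj
  by (rule column_sum_sym_normalized_le_sqrt)
     (simp_all add: finite_V hyper_adj_nonneg hdeg_ge_1 sum_hyper_adj_eq_hdeg)

lemma mat_norm1_genT_le:
  assumes "V \<noteq> {}"
  shows "mat_norm1 V (genT V Es Q w \<rho>) \<le> sqrt (1 + \<rho>_max * real E * real D)"
proof (rule mat_norm1_le[OF finite_V assms])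
  fix v assume v: "v \<in> V"
  have "(\<Sum>u\<in>V. \<bar>genT V Es Q w \<rho> u v\<bar>) \<le> sqrt (hdeg V Es Q w \<rho> v)"
    by (rule genT_column_sum_le_sqrt_hdeg[OF v])
  also have "\<dots> \<le> sqrt (1 + \<rho>_max * real E * real D)"
    using hdeg_le[OF v] by simp
  finally show "(\<Sum>u\<in>V. \<bar>genT V Es Q w \<rho> u v\<bar>) \<le> sqrt (1 + \<rho>_max * real E * real D)" .
qed

end

theorem proposition1:
  fixes V :: "'v set" and Es :: "'v set set"
    and Q :: "'v \<Rightarrow> 'v set \<Rightarrow> real" and w :: "'v set \<Rightarrow> real"
    and \<rho> :: "real \<Rightarrow> real" and E D :: nat
  assumes "finite V" "V \<noteq> {}" "finite Es"
    and "\<forall>e\<in>Es. e \<noteq> {} \<and> e \<subseteq> V"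
    and "\<forall>v\<in>V. \<forall>e\<in>Es. 0 \<le> Q v e \<and> Q v e \<le> 1"
    and "\<forall>v\<in>V. \<forall>e\<in>Es. v \<notin> e \<longrightarrow> Q v e = 0"
    and "\<forall>e\<in>Es. 0 \<le> w e \<and> w e \<le> 1"
    and "\<forall>x\<ge>0. 0 \<le> \<rho> x"
    and "\<forall>e\<in>Es. card e \<le> E"
    and "\<forall>v\<in>V. card {e\<in>Es. v \<in> e} \<le> D"
    and "bdd_above (\<rho> ` {0..real E})"
  shows "mat_norm1 V (genT V Es Q w \<rho>)
           \<le> sqrt (1 + (SUP x\<in>{0..real E}. \<rho> x) * real E * real D)"
proof -
  interpret weighted_hypergraph V Es Q w \<rho> E D
    using assms by unfold_locales auto
  show ?thesis using mat_norm1_genT_le[OF \<open>V \<noteq> {}\<close>] by (simp add: \<rho>_max_def)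
qed

end
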